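(* Let $f\colon\mathbb{R}^n\to\mathbb{R}^d$ be a Borel map and let $\mu$ be a Borel probability measure on $\mathbb{R}^n$. Then $$\dim_P\mu_f=\sup\Big\{\gamma:\ \liminf_{r\to0+}r^{-\gamma}\int_{\mathbb{R}^n}I_d^f(x,y,r)\,d\mu(y)=0\text{ for }\mu\text{-a.e. }x\in\mathbb{R}^n\Big\},$$ $$\dim_P\mu_{f^*}=\sup\Big\{\gamma:\ \liminf_{r\to0+}r^{-\gamma}\int_{D(x,r)}I_d^f(x,y,r)\,d\mu(y)=0\text{ for }\mu\text{-a.e. }x\in\mathbb{R}^n\Big\}.$$
   Context: $\mu_h=\mu\circ h^{-1}$; $f^*(t)=(t,f(t))\in\mathbb{R}^{n+d}$. For a Borel probability measure $\nu$, $\dim_P\nu=\inf\{\dim_P E: E\text{ Borel},\ \nu(E)>0\}$ with $\dim_P E$ packing dimension. $D(x,r)$ is the closed ball in the maximum norm on $\mathbb{R}^n$. $I_d(z)=\prod_{i=1}^d\min\{1,|z_i|^{-1}\}$ for $z\in\mathbb{R}^d$ (with $\min\{1,0^{-1}\}=1$), and $I_d^f(x,y,r)=I_d\big((f(y)-f(x))/r\big)$. *)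

theory Defs
  imports "HOL-Analysis.Analysis" "HOL-Probability.Probability"
begin

definition packing_pre_delta :: "real \<Rightarrow> real \<Rightarrow> 'a::metric_space set \<Rightarrow> ennreal" where
  "packing_pre_delta s \<delta> E =
     (SUP P \<in> {P. countable P \<and> P \<subseteq> E \<times> {0<..\<delta>} \<and>
                 (\<forall>p\<in>P. \<forall>q\<in>P. p \<noteq> q \<longrightarrow>
                    cball (fst p) (snd p) \<inter> cball (fst q) (snd q) = {})}.
        (\<integral>\<^sup>+ p. ennreal ((2 * snd p) powr s) \<partial>count_space P))"

definition packing_premeasure :: "real \<Rightarrow> 'a::metric_space set \<Rightarrow> ennreal" where
  "packing_premeasure s E = (INF \<delta> \<in> {0<..}. packing_pre_delta s \<delta> E)"

definition packing_measure :: "real \<Rightarrow> 'a::metric_space set \<Rightarrow> ennreal" where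
  "packing_measure s E =
     (INF A \<in> {A :: nat \<Rightarrow> 'a set. E \<subseteq> (\<Union>i. A i)}. (\<Sum>i. packing_premeasure s (A i)))"

definition packing_dim :: "'a::metric_space set \<Rightarrow> ereal" where
  "packing_dim E = Inf {ereal s | s. 0 \<le> s \<and> packing_measure s E = 0}"

definition packing_dim_measure :: "'a::metric_space measure \<Rightarrow> ereal" where
  "packing_dim_measure \<nu> = (INF E \<in> {E \<in> sets \<nu>. emeasure \<nu> E > 0}. packing_dim E)"

definition Dmax :: "real^'n \<Rightarrow> real \<Rightarrow> (real^'n) set" where
  "Dmax x r = {y. \<forall>i. \<bar>y $ i - x $ i\<bar> \<le> r}"

definition I_d :: "real^'d \<Rightarrow> real" where
  "I_d z = (\<Prod>i\<in>UNIV. if z $ i = 0 then 1 else min 1 (1 / \<bar>z $ i\<bar>))"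

definition I_d_f :: "(real^'n \<Rightarrow> real^'d) \<Rightarrow> real^'n \<Rightarrow> real^'n \<Rightarrow> real \<Rightarrow> real" where
  "I_d_f f x y r = I_d ((1 / r) *\<^sub>R (f y - f x))"

definition graph_map :: "(real^'n \<Rightarrow> real^'d) \<Rightarrow> real^'n \<Rightarrow> (real^'n) \<times> (real^'d)" where
  "graph_map f t = (t, f t)"

end

theory Submission
  imports Defs
begin

(* Both formulas are instances of one statement about the push-forward \<nu> = \<mu> \<circ> h\<^sup>-\<^sup>1 of a
   probability measure under a Borel map h into a Euclidean space: dim_P \<nu> is the supremum of
   the \<gamma> with liminf_{r\<rightarrow>0+} r^-\<gamma> Q(x,r) = 0 for \<mu>-a.e. x, for any Q squeezed between
   \<nu>(B(h x, r)) and the kernel integral G(h x, r) = \<integral> I((z - h x)/r) d\<nu>(z).  For h = f the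
   integral of I_d^f is G itself; for h = f* the integral over D(x,r) lies in between.

   If liminf r^-\<gamma> \<nu>(B(h x, r)) = 0 almost everywhere, then for s < \<gamma> almost every point has
   lower s-density zero, and such points are covered by balls B(w, 5\<rho>) of small \<nu>-measure
   whose shrunken balls B(w, \<rho>) form a \<delta>-packing (Vitali); so sets of packing s-measure zero
   are \<nu>-null and dim_P \<nu> \<ge> \<gamma>.  Conversely, for 0 \<le> \<gamma> < t < dim_P \<nu> the points where
   G(w, r) \<ge> r^\<gamma>/\<kappa> for all small r have packing t-premeasure zero: summing (2r)^t over a
   packing reduces, by Tonelli, to the bound \<Sum>_p r_p^e I((z - x_p)/r_p) \<le> C uniformly in z
   (for small e > 0), which holds because each term is dominated by a constant times the integral
   over B(x_p, r_p) of the locally integrable function \<Prod>_b |z_b - y_b|^(e/D - 1), and the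
   balls of a packing are disjoint. *)

(* For r > 0 this is I_d(a/r) (lemma I_d_scaleR_eq_prod_kernel), written over Basis so that it
   also makes sense on the product space of the graph. *)
definition prod_kernel :: "real \<Rightarrow> 'a::euclidean_space \<Rightarrow> real" where
  "prod_kernel r a = (\<Prod>b\<in>Basis. r / max r \<bar>a \<bullet> b\<bar>)"

lemma prod_kernel_nonneg: "0 < r \<Longrightarrow> 0 \<le> prod_kernel r a"
  unfolding prod_kernel_def by (intro prod_nonneg) auto

lemma prod_kernel_le_1: "0 < r \<Longrightarrow> prod_kernel r a \<le> 1"
  unfolding prod_kernel_def by (intro prod_le_1) auto

lemma prod_kernel_eq_1: "0 < r \<Longrightarrow> (\<And>b. b \<in> Basis \<Longrightarrow> \<bar>a \<bullet> b\<bar> \<le> r) \<Longrightarrow> prod_kernel r a = 1"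
  unfolding prod_kernel_def by (intro prod.neutral) (force simp: max_def)

lemma prod_kernel_eq_1_of_norm_le: "0 < r \<Longrightarrow> norm a \<le> r \<Longrightarrow> prod_kernel r a = 1"
  by (rule prod_kernel_eq_1) (auto intro: order_trans[OF Basis_le_norm])

lemma prod_kernel_vec_eq_1: "0 < r \<Longrightarrow> (\<And>i. \<bar>(a::real^'n) $ i\<bar> \<le> r) \<Longrightarrow> prod_kernel r a = 1"
  by (rule prod_kernel_eq_1) (auto simp: Basis_vec_def inner_axis)

lemma prod_kernel_mono: assumes "0 < r" "r \<le> r'" shows "prod_kernel r a \<le> prod_kernel r' a"
  unfolding prod_kernel_def
proof (intro prod_mono conjI)
  fix b :: 'a
  show "0 \<le> r / max r \<bar>a \<bullet> b\<bar>" using assms by auto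
  show "r / max r \<bar>a \<bullet> b\<bar> \<le> r' / max r' \<bar>a \<bullet> b\<bar>"
    using assms by (auto simp: max_def field_simps)
qed

lemma prod_kernel_Pair: "prod_kernel r (a, b) = prod_kernel r a * prod_kernel r b"
proof -
  have "prod_kernel r (a, b) =
      (\<Prod>u\<in>(\<lambda>u. (u, 0)) ` Basis \<union> (\<lambda>v. (0, v)) ` Basis. r / max r \<bar>(a, b) \<bullet> u\<bar>)"
    unfolding prod_kernel_def Basis_prod_def ..
  also have "\<dots> = (\<Prod>u\<in>(\<lambda>u. (u, 0)) ` Basis. r / max r \<bar>(a, b) \<bullet> u\<bar>) *
                  (\<Prod>u\<in>(\<lambda>v. (0, v)) ` Basis. r / max r \<bar>(a, b) \<bullet> u\<bar>)"
    by (subst prod.union_disjoint) auto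
  also have "\<dots> = prod_kernel r a * prod_kernel r b"
    unfolding prod_kernel_def by (subst prod.reindex, simp add: inj_on_def)+ simp
  finally show ?thesis .
qed

lemma I_d_scaleR_eq_prod_kernel:
  fixes z :: "real^'d"
  assumes r: "0 < r"
  shows "I_d ((1 / r) *\<^sub>R z) = prod_kernel r z"
proof -
  have B: "(Basis :: (real^'d) set) = range (\<lambda>i. axis i 1)"
    by (auto simp: Basis_vec_def)
  have inj: "inj (\<lambda>i::'d. axis i (1::real))"
    by (auto simp: inj_def axis_eq_axis)
  have "prod_kernel r z = (\<Prod>i\<in>UNIV. r / max r \<bar>z $ i\<bar>)"
    unfolding prod_kernel_def B by (subst prod.reindex[OF inj]) (simp add: inner_axis)
  also have "\<dots> = I_d ((1 / r) *\<^sub>R z)"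
    unfolding I_d_def
  proof (intro prod.cong refl)
    fix i
    show "r / max r \<bar>z $ i\<bar> =
        (if ((1 / r) *\<^sub>R z) $ i = 0 then 1 else min 1 (1 / \<bar>((1 / r) *\<^sub>R z) $ i\<bar>))"
      using r by (auto simp: max_def min_def abs_mult field_simps)
  qed
  finally show ?thesis ..
qed

lemma I_d_f_eq_prod_kernel: "0 < r \<Longrightarrow> I_d_f f x y r = prod_kernel r (f y - f x)"
  unfolding I_d_f_def by (rule I_d_scaleR_eq_prod_kernel)

lemma continuous_on_prod_kernel:
  "0 < r \<Longrightarrow> continuous_on UNIV (prod_kernel r :: 'a::euclidean_space \<Rightarrow> real)"
  unfolding prod_kernel_def by (intro continuous_intros) auto

lemma borel_measurable_prod_kernel_shift:
  "0 < r \<Longrightarrow> (\<lambda>z. prod_kernel r (z - w)) \<in> borel_measurable (borel :: 'a::euclidean_space measure)"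
  by (intro borel_measurable_continuous_onI continuous_on_compose2[OF continuous_on_prod_kernel]
        continuous_intros) auto

subsection \<open>Sets of packing measure zero are null for measures of small lower density\<close>

definition zero_lower_density :: "'a::metric_space measure \<Rightarrow> real \<Rightarrow> 'a set" where
  "zero_lower_density \<nu> s =
     {w. \<forall>c>0. \<forall>\<epsilon>>0. \<exists>r. 0 < r \<and> r < \<epsilon> \<and> measure \<nu> (cball w r) < c * r powr s}"

lemma in_zero_lower_density_of_Liminf:
  assumes ball: "\<And>r. 0 < r \<Longrightarrow> measure \<nu> (cball w r) \<le> q r"
    and lim: "Liminf (at_right 0) (\<lambda>r. ereal (r powr (-\<gamma>) * q r)) = 0" and "s \<le> \<gamma>"
  shows "w \<in> zero_lower_density \<nu> s"
  unfolding zero_lower_density_def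
proof (intro CollectI allI impI)
  fix c \<epsilon> :: real assume c: "0 < c" and \<epsilon>: "0 < \<epsilon>"
  have "\<exists>\<^sub>F r in at_right 0. ereal (r powr (-\<gamma>) * q r) < ereal c"
  proof (rule ccontr)
    assume "\<not> ?thesis"
    then have "ereal c \<le> Liminf (at_right 0) (\<lambda>r. ereal (r powr (-\<gamma>) * q r))"
      by (intro Liminf_bounded) (simp add: not_frequently not_less)
    with c lim show False by simp
  qed
  moreover have "\<forall>\<^sub>F r in at_right 0. 0 < r \<and> r < min \<epsilon> 1"
    using \<epsilon> unfolding eventually_at_right_field by (intro exI[of _ "min \<epsilon> 1"]) auto
  ultimately have "\<exists>\<^sub>F r in at_right 0.
      ereal (r powr (-\<gamma>) * q r) < ereal c \<and> 0 < r \<and> r < min \<epsilon> 1"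
    by (rule frequently_eventually_frequently)
  then obtain r where r: "0 < r" "r < min \<epsilon> 1" "r powr (-\<gamma>) * q r < c"
    by (auto dest: frequently_ex)
  then have "q r < c * r powr \<gamma>"
    by (simp add: powr_minus field_simps)
  also have "\<dots> \<le> c * r powr s"
    using r c \<open>s \<le> \<gamma>\<close> by (intro mult_left_mono powr_mono') auto
  finally show "\<exists>r. 0 < r \<and> r < \<epsilon> \<and> measure \<nu> (cball w r) < c * r powr s"
    using r ball[of r] by (intro exI[of _ r]) auto
qed


lemma zero_lower_density_small_ball:
  assumes w: "w \<in> zero_lower_density \<nu> s" and \<delta>: "0 < \<delta>"
  obtains r where "0 < r" "r \<le> \<delta>" "measure \<nu> (cball w (5 * r)) < r powr s"
proof -
  have "\<forall>c>0. \<forall>\<epsilon>>0. \<exists>r. 0 < r \<and> r < \<epsilon> \<and> measure \<nu> (cball w r) < c * r powr s"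
    using w unfolding zero_lower_density_def by simp
  from this[rule_format, of "5 powr (-s)" "5 * \<delta>"] \<delta> obtain \<rho>
    where \<rho>: "0 < \<rho>" "\<rho> < 5 * \<delta>" "measure \<nu> (cball w \<rho>) < 5 powr (-s) * \<rho> powr s"
    by auto
  have "5 powr (-s) * \<rho> powr s = (\<rho> / 5) powr s"
    by (simp add: powr_divide powr_minus_divide)
  with \<rho> show thesis by (intro that[of "\<rho> / 5"]) auto
qed

lemma le_nn_integral_count_space:
  assumes "j \<in> I" shows "f j \<le> (\<integral>\<^sup>+ i. f i \<partial>count_space I)"
proof -
  have "(\<integral>\<^sup>+ i. f i * indicator {j} i \<partial>count_space I) = f j"
    using assms by (subst nn_integral_count_space'[where A="{j}"]) auto
  moreover have "(\<integral>\<^sup>+ i. f i * indicator {j} i \<partial>count_space I) \<le> (\<integral>\<^sup>+ i. f i \<partial>count_space I)"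
    by (intro nn_integral_mono) (auto split: split_indicator)
  ultimately show ?thesis by simp
qed

lemma emeasure_UN_countable_le:
  assumes I: "countable I" and X: "\<And>i. i \<in> I \<Longrightarrow> X i \<in> sets M"
  shows "emeasure M (\<Union>(X ` I)) \<le> (\<integral>\<^sup>+ i. emeasure M (X i) \<partial>count_space I)"
proof -
  have "emeasure M (\<Union>(X ` I)) = (\<integral>\<^sup>+ x. indicator (\<Union>(X ` I)) x \<partial>M)"
    using I X by (intro nn_integral_indicator[symmetric] sets.countable_UN') auto
  also have "\<dots> \<le> (\<integral>\<^sup>+ x. (\<integral>\<^sup>+ i. indicator (X i) x \<partial>count_space I) \<partial>M)"
    by (intro nn_integral_mono)
       (auto simp: indicator_def intro: order_trans[OF _ le_nn_integral_count_space])
  also have "\<dots> = (\<integral>\<^sup>+ i. (\<integral>\<^sup>+ x. indicator (X i) x \<partial>M) \<partial>count_space I)"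
    using X by (intro nn_integral_count_space_nn_integral I) auto
  also have "\<dots> = (\<integral>\<^sup>+ i. emeasure M (X i) \<partial>count_space I)"
    using X by (intro nn_integral_cong) auto
  finally show ?thesis .
qed

lemma packing_pre_delta_mono: "A \<subseteq> B \<Longrightarrow> packing_pre_delta s \<delta> A \<le> packing_pre_delta s \<delta> B"
  unfolding packing_pre_delta_def by (rule SUP_subset_mono) auto

lemma outer_measure_of_le_packing_pre_delta:
  fixes \<nu> :: "'a::euclidean_space measure"
  assumes fin: "finite_measure \<nu>" and sets_\<nu>: "sets \<nu> = sets borel"
    and s: "0 \<le> s" and \<delta>: "0 < \<delta>" and A: "A \<subseteq> zero_lower_density \<nu> s"
  shows "outer_measure_of \<nu> A \<le> packing_pre_delta s \<delta> A"
proof -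
  interpret finite_measure \<nu> by fact
  define K where "K = {p. fst p \<in> A \<and> 0 < snd p \<and> snd p \<le> \<delta> \<and>
      measure \<nu> (cball (fst p) (5 * snd p)) < snd p powr s}"
  have cover: "A \<subseteq> (\<Union>p\<in>K. cball (fst p) (snd p))"
  proof
    fix w assume w: "w \<in> A"
    with A \<delta> obtain r where "0 < r" "r \<le> \<delta>" "measure \<nu> (cball w (5 * r)) < r powr s"
      by (meson subsetD zero_lower_density_small_ball)
    with w show "w \<in> (\<Union>p\<in>K. cball (fst p) (snd p))"
      by (intro UN_I[of "(w, r)"]) (auto simp: K_def)
  qed
  obtain C where C: "countable C" "C \<subseteq> K"
    "pairwise (\<lambda>i j. disjnt (cball (fst i) (snd i)) (cball (fst j) (snd j))) C"
    "A \<subseteq> (\<Union>i\<in>C. cball (fst i) (5 * snd i))"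
    using Vitali_covering_lemma_cballs[OF cover, of \<delta>] unfolding K_def by auto
  have "outer_measure_of \<nu> A \<le> emeasure \<nu> (\<Union>i\<in>C. cball (fst i) (5 * snd i))"
    unfolding outer_measure_of_def using C(1,4) sets_\<nu>
    by (intro INF_lower) (auto intro: sets.countable_UN')
  also have "\<dots> \<le> (\<integral>\<^sup>+ i. emeasure \<nu> (cball (fst i) (5 * snd i)) \<partial>count_space C)"
    using C(1) sets_\<nu> by (intro emeasure_UN_countable_le) auto
  also have "\<dots> \<le> (\<integral>\<^sup>+ i. ennreal ((2 * snd i) powr s) \<partial>count_space C)"
  proof (intro nn_integral_mono)
    fix i assume "i \<in> space (count_space C)"
    then have i: "i \<in> K" using C by auto
    have "snd i powr s \<le> (2 * snd i) powr s"
      using i s by (intro powr_mono2) (auto simp: K_def)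
    with i have "measure \<nu> (cball (fst i) (5 * snd i)) \<le> (2 * snd i) powr s"
      by (auto simp: K_def)
    then show "emeasure \<nu> (cball (fst i) (5 * snd i)) \<le> ennreal ((2 * snd i) powr s)"
      by (simp add: emeasure_eq_measure ennreal_leI)
  qed
  also have "\<dots> \<le> packing_pre_delta s \<delta> A"
    unfolding packing_pre_delta_def
  proof (rule SUP_upper)
    show "C \<in> {P. countable P \<and> P \<subseteq> A \<times> {0<..\<delta>} \<and>
          (\<forall>p\<in>P. \<forall>q\<in>P. p \<noteq> q \<longrightarrow> cball (fst p) (snd p) \<inter> cball (fst q) (snd q) = {})}"
      using C unfolding K_def pairwise_def disjnt_def by (auto simp: mem_Times_iff subset_iff)
  qed
  finally show ?thesis .
qed

lemma outer_measure_of_UN_le: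
  assumes "\<And>i. A i \<subseteq> space M"
  shows "outer_measure_of M (\<Union>i. A i) \<le> (\<Sum>i. outer_measure_of M (A i))"
proof -
  obtain E where E: "\<And>i. E i \<in> sets M" "\<And>i. A i \<subseteq> E i"
      "\<And>i. outer_measure_of M (A i) = emeasure M (E i)"
    using outer_measure_of_attain[OF assms] by metis
  have "outer_measure_of M (\<Union>i. A i) \<le> outer_measure_of M (\<Union>i. E i)"
    using E(2) by (intro outer_measure_of_mono) blast
  also have "\<dots> = emeasure M (\<Union>i. E i)"
    using E(1) by (intro outer_measure_of_eq) auto
  also have "\<dots> \<le> (\<Sum>i. emeasure M (E i))"
    using E(1) by (intro emeasure_subadditive_countably) auto
  finally show ?thesis using E(3) by simp
qed

lemma outer_measure_of_le_packing_measure: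
  fixes \<nu> :: "'a::euclidean_space measure"
  assumes fin: "finite_measure \<nu>" and sets_\<nu>: "sets \<nu> = sets borel" and s: "0 \<le> s"
  shows "outer_measure_of \<nu> (E \<inter> zero_lower_density \<nu> s) \<le> packing_measure s E"
  unfolding packing_measure_def
proof (rule INF_greatest)
  fix A :: "nat \<Rightarrow> 'a set" assume "A \<in> {A. E \<subseteq> (\<Union>i. A i)}"
  then have "outer_measure_of \<nu> (E \<inter> zero_lower_density \<nu> s)
      \<le> outer_measure_of \<nu> (\<Union>i. A i \<inter> zero_lower_density \<nu> s)"
    by (intro outer_measure_of_mono) blast
  also have "\<dots> \<le> (\<Sum>i. outer_measure_of \<nu> (A i \<inter> zero_lower_density \<nu> s))"
    using sets_eq_imp_space_eq[OF sets_\<nu>] by (intro outer_measure_of_UN_le) auto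
  also have "\<dots> \<le> (\<Sum>i. packing_premeasure s (A i))"
  proof (intro suminf_le)
    fix i
    show "outer_measure_of \<nu> (A i \<inter> zero_lower_density \<nu> s) \<le> packing_premeasure s (A i)"
      unfolding packing_premeasure_def
    proof (rule INF_greatest)
      fix \<delta> :: real assume "\<delta> \<in> {0<..}"
      then have "outer_measure_of \<nu> (A i \<inter> zero_lower_density \<nu> s)
          \<le> packing_pre_delta s \<delta> (A i \<inter> zero_lower_density \<nu> s)"
        by (intro outer_measure_of_le_packing_pre_delta[OF fin sets_\<nu> s]) auto
      also have "\<dots> \<le> packing_pre_delta s \<delta> (A i)"
        by (intro packing_pre_delta_mono) auto
      finally show "outer_measure_of \<nu> (A i \<inter> zero_lower_density \<nu> s) \<le> packing_pre_delta s \<delta> (A i)" .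
    qed
  qed auto
  finally show "outer_measure_of \<nu> (E \<inter> zero_lower_density \<nu> s) \<le> (\<Sum>i. packing_premeasure s (A i))" .
qed

lemma ereal_le_packing_dim_of_AE_Liminf:
  fixes h :: "'m \<Rightarrow> 'a::euclidean_space"
  assumes M: "prob_space M" and h[measurable]: "h \<in> M \<rightarrow>\<^sub>M borel"
    and ball: "\<And>x r. x \<in> space M \<Longrightarrow> 0 < r \<Longrightarrow> measure (distr M borel h) (cball (h x) r) \<le> Q x r"
    and AE: "AE x in M. Liminf (at_right 0) (\<lambda>r. ereal (r powr (-\<gamma>) * Q x r)) = 0"
    and E: "E \<in> sets borel" "0 < emeasure (distr M borel h) E"
  shows "ereal \<gamma> \<le> packing_dim E"
proof (rule ccontr)
  define \<nu> where "\<nu> = distr M borel h"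
  interpret M: prob_space M by fact
  have fin: "finite_measure \<nu>"
    unfolding \<nu>_def using M.prob_space_distr[OF h] by (simp add: prob_space_def)
  have sets_\<nu>: "sets \<nu> = sets borel" unfolding \<nu>_def by simp
  assume "\<not> ereal \<gamma> \<le> packing_dim E"
  then obtain s where s: "0 \<le> s" "packing_measure s E = 0" "s < \<gamma>"
    unfolding packing_dim_def by (auto simp: Inf_less_iff not_le)
  have "outer_measure_of \<nu> (E \<inter> zero_lower_density \<nu> s) = 0"
    using outer_measure_of_le_packing_measure[OF fin sets_\<nu> s(1), of E] s(2) by simp
  with outer_measure_of_attain[of "E \<inter> zero_lower_density \<nu> s" \<nu>]
  obtain U where U: "U \<in> null_sets \<nu>" "E \<inter> zero_lower_density \<nu> s \<subseteq> U"
    by (auto simp: sets_eq_imp_space_eq[OF sets_\<nu>])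
  have "AE x in M. h x \<notin> U"
    using AE_distrD[OF h AE_not_in[OF U(1)[unfolded \<nu>_def]]] .
  moreover have "AE x in M. h x \<in> zero_lower_density \<nu> s"
    using AE AE_space
  proof eventually_elim
    case (elim x)
    show ?case
      using ball[OF elim(2)] elim(1) s(3) unfolding \<nu>_def
      by (intro in_zero_lower_density_of_Liminf) auto
  qed
  ultimately have "AE x in M. h x \<notin> E"
    by eventually_elim (use U(2) in auto)
  then have "E \<in> null_sets \<nu>"
    unfolding \<nu>_def using E(1) by (subst AE_iff_null_sets) (auto simp: AE_distr_iff)
  with E(2) show False by (auto simp: \<nu>_def dest: null_setsD1)
qed

subsection \<open>A uniform bound for kernel sums over packings\<close>

lemma borel_cball[measurable]: "cball (c::'a::metric_space) \<rho> \<in> sets borel"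
  by (rule borel_closed) simp

(* The value \<infinity> at the singularity lets the pointwise comparison in
   prod_kernel_le_nn_integral_cball hold everywhere, not just almost everywhere. *)
definition singular_weight :: "real \<Rightarrow> real \<Rightarrow> ennreal" where
  "singular_weight \<eta> t = (if t = 0 then \<top> else ennreal (\<bar>t\<bar> powr (\<eta> - 1)))"

lemma borel_measurable_singular_weight[measurable]: "singular_weight \<eta> \<in> borel_measurable borel"
  unfolding singular_weight_def by measurable

lemma nn_integral_singular_weight_centered_le:
  assumes \<eta>: "0 < \<eta>" and M: "0 < M"
  shows "(\<integral>\<^sup>+ u. singular_weight \<eta> u * indicator {-M..M} u \<partial>lborel) \<le> ennreal (2 * (M powr \<eta> / \<eta>))"
proof -
  define g where "g u = ennreal (indicator {0..M} u * u powr (\<eta> - 1))" for u :: real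
  have [measurable]: "g \<in> borel_measurable borel"
    unfolding g_def by measurable
  have int_g: "(\<integral>\<^sup>+ u. g u \<partial>lborel) = ennreal (M powr \<eta> / \<eta>)"
    unfolding g_def
    using nn_integral_has_integral_lebesgue[OF _ has_integral_powr_from_0[of "\<eta>-1" M]] \<eta> M by simp
  have int_g': "(\<integral>\<^sup>+ u. g (-u) \<partial>lborel) = ennreal (M powr \<eta> / \<eta>)"
    using nn_integral_real_affine[of g "-1" 0] int_g by simp
  have "(\<integral>\<^sup>+ u. singular_weight \<eta> u * indicator {-M..M} u \<partial>lborel) \<le> (\<integral>\<^sup>+ u. g u + g (-u) \<partial>lborel)"
  proof (intro nn_integral_mono_AE)
    show "AE u in lborel. singular_weight \<eta> u * indicator {-M..M} u \<le> g u + g (-u)"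
      using AE_lborel_singleton[of 0]
    proof eventually_elim
      case (elim u)
      then consider "0 < u" | "u < 0" by linarith
      then show ?case
        by cases (auto simp: g_def singular_weight_def indicator_def)
    qed
  qed
  also have "\<dots> = ennreal (2 * (M powr \<eta> / \<eta>))"
    using int_g int_g' \<eta> M by (subst nn_integral_add) (auto simp flip: ennreal_plus)
  finally show ?thesis .
qed

lemma nn_integral_singular_weight_le:
  assumes \<eta>: "0 < \<eta>" "\<eta> < 1" and M: "0 < M"
  shows "(\<integral>\<^sup>+ t. singular_weight \<eta> (c - t) * indicator {-M..M} t \<partial>lborel)
    \<le> ennreal (2 * (M powr \<eta> / \<eta>) + 2 * M powr \<eta>)"
proof -
  define g where "g u = singular_weight \<eta> u * indicator {-M..M} u" for u
  have "(\<integral>\<^sup>+ t. singular_weight \<eta> (c - t) * indicator {-M..M} t \<partial>lborel) \<le>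
        (\<integral>\<^sup>+ t. g (c - t) + ennreal (M powr (\<eta> - 1)) * indicator {-M..M} t \<partial>lborel)"
  proof (intro nn_integral_mono)
    fix t
    have "singular_weight \<eta> (c - t) \<le> ennreal (M powr (\<eta> - 1))" if "M < \<bar>c - t\<bar>"
      using that M \<eta> by (auto simp: singular_weight_def intro!: ennreal_leI powr_mono2')
    then show "singular_weight \<eta> (c - t) * indicator {-M..M} t
        \<le> g (c - t) + ennreal (M powr (\<eta> - 1)) * indicator {-M..M} t"
      by (cases "\<bar>c - t\<bar> \<le> M") (auto simp: g_def indicator_def add_increasing add_increasing2)
  qed
  also have "\<dots> = (\<integral>\<^sup>+ t. g (c - t) \<partial>lborel) + ennreal (M powr (\<eta> - 1)) * emeasure lborel {-M..M}"
    unfolding g_def by (subst nn_integral_add) (auto simp: nn_integral_cmult_indicator)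
  also have "(\<integral>\<^sup>+ t. g (c - t) \<partial>lborel) = (\<integral>\<^sup>+ u. g u \<partial>lborel)"
    using nn_integral_real_affine[of g "-1" c] unfolding g_def by simp
  also have "ennreal (M powr (\<eta> - 1)) * emeasure lborel {-M..M} = ennreal (2 * M powr \<eta>)"
  proof -
    have "M powr (\<eta> - 1) * (M - - M) = 2 * M powr \<eta>"
      using M by (simp add: powr_diff field_simps)
    then show ?thesis using M by (simp flip: ennreal_mult)
  qed
  also have "(\<integral>\<^sup>+ u. g u \<partial>lborel) + ennreal (2 * M powr \<eta>)
      \<le> ennreal (2 * (M powr \<eta> / \<eta>)) + ennreal (2 * M powr \<eta>)"
    unfolding g_def using nn_integral_singular_weight_centered_le[OF \<eta>(1) M] by (rule add_right_mono)
  also have "\<dots> = ennreal (2 * (M powr \<eta> / \<eta>) + 2 * M powr \<eta>)"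
    using M \<eta> by (simp flip: ennreal_plus)
  finally show ?thesis .
qed

lemma nn_integral_singular_weight_box_le:
  fixes z :: "'a::euclidean_space"
  assumes \<eta>: "0 < \<eta>" "\<eta> < 1" and M: "0 < M"
  shows "(\<integral>\<^sup>+ y. (\<Prod>b\<in>Basis. singular_weight \<eta> ((z - y) \<bullet> b)) *
             indicator {y. \<forall>b\<in>Basis. \<bar>y \<bullet> b\<bar> \<le> M} y \<partial>lborel)
    \<le> ennreal ((2 * (M powr \<eta> / \<eta>) + 2 * M powr \<eta>) ^ DIM('a))"
proof -
  define B where "B = 2 * (M powr \<eta> / \<eta>) + 2 * M powr \<eta>"
  have B: "0 \<le> B" using M \<eta> by (simp add: B_def)
  have "(\<integral>\<^sup>+ y. (\<Prod>b\<in>Basis. singular_weight \<eta> ((z - y) \<bullet> b)) *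
             indicator {y. \<forall>b\<in>Basis. \<bar>y \<bullet> b\<bar> \<le> M} y \<partial>lborel) =
     (\<integral>\<^sup>+ y. (\<Prod>b\<in>Basis. singular_weight \<eta> (z \<bullet> b - y \<bullet> b) * indicator {-M..M} (y \<bullet> b)) \<partial>lborel)"
  proof (intro nn_integral_cong)
    fix y :: 'a
    have "indicator {y. \<forall>b\<in>Basis. \<bar>y \<bullet> b\<bar> \<le> M} y = (\<Prod>b\<in>Basis. indicator {-M..M} (y \<bullet> b) :: ennreal)"
    proof (cases "\<forall>b\<in>Basis. \<bar>y \<bullet> b\<bar> \<le> M")
      case True
      then show ?thesis by (subst prod.neutral) (auto simp: indicator_def abs_le_iff)
    next
      case False
      then obtain b where "b \<in> Basis" "M < \<bar>y \<bullet> b\<bar>" by (auto simp: not_le)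
      then have "(\<Prod>b\<in>Basis. indicator {-M..M} (y \<bullet> b) :: ennreal) = 0"
        by (intro prod_zero) (auto simp: indicator_def intro!: bexI[of _ b])
      with False show ?thesis by simp
    qed
    then show "(\<Prod>b\<in>Basis. singular_weight \<eta> ((z - y) \<bullet> b)) * indicator {y. \<forall>b\<in>Basis. \<bar>y \<bullet> b\<bar> \<le> M} y =
        (\<Prod>b\<in>Basis. singular_weight \<eta> (z \<bullet> b - y \<bullet> b) * indicator {-M..M} (y \<bullet> b))"
      by (simp add: prod.distrib inner_diff_left)
  qed
  also have "\<dots> = (\<Prod>b\<in>Basis. (\<integral>\<^sup>+ t. singular_weight \<eta> (z \<bullet> b - t) * indicator {-M..M} t \<partial>lborel))"
    by (rule nn_integral_lborel_prod) auto
  also have "\<dots> \<le> (\<Prod>b\<in>(Basis::'a set). ennreal B)"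
    unfolding B_def by (intro prod_mono_ennreal nn_integral_singular_weight_le[OF \<eta> M])
  also have "\<dots> = ennreal (B ^ DIM('a))"
    using B by (simp add: ennreal_power)
  finally show ?thesis unfolding B_def .
qed

lemma prod_kernel_le_prod_abs_powr:
  fixes z w y :: "'a::euclidean_space" and r \<eta> :: real
  assumes r: "0 < r" and y: "dist w y \<le> r" and nz: "\<And>b. b \<in> Basis \<Longrightarrow> (z - y) \<bullet> b \<noteq> 0"
    and \<eta>: "0 < \<eta>" "\<eta> < 1"
  shows "r powr (\<eta> * DIM('a)) * prod_kernel r (z - w)
    \<le> (2 * r) ^ DIM('a) * (\<Prod>b\<in>Basis. \<bar>(z - y) \<bullet> b\<bar> powr (\<eta> - 1))"
proof -
  have "r powr (\<eta> * DIM('a)) * prod_kernel r (z - w)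
      = (\<Prod>b\<in>(Basis::'a set). r powr \<eta> * (r / max r \<bar>(z - w) \<bullet> b\<bar>))"
    unfolding prod_kernel_def prod.distrib using r by (simp add: powr_realpow[symmetric] powr_powr)
  also have "\<dots> \<le> (\<Prod>b\<in>(Basis::'a set). 2 * r * \<bar>(z - y) \<bullet> b\<bar> powr (\<eta> - 1))"
  proof (intro prod_mono conjI)
    fix b :: 'a assume b: "b \<in> Basis"
    show "0 \<le> r powr \<eta> * (r / max r \<bar>(z - w) \<bullet> b\<bar>)" using r by auto
    define a where "a = \<bar>(z - w) \<bullet> b\<bar>"
    define a' where "a' = \<bar>(z - y) \<bullet> b\<bar>"
    define m where "m = max r a'"
    have a': "0 < a'" using nz[OF b] by (simp add: a'_def)
    have "\<bar>(y - w) \<bullet> b\<bar> \<le> r"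
      using Basis_le_norm[OF b, of "y - w"] y by (simp add: dist_norm norm_minus_commute)
    moreover have "(z - y) \<bullet> b = (z - w) \<bullet> b - (y - w) \<bullet> b" by (simp add: inner_diff_left)
    ultimately have "a' \<le> a + r" unfolding a_def a'_def by linarith
    then have "m \<le> 2 * max r a" using r by (auto simp: m_def a_def max_def)
    then have "r / max r a \<le> 2 * r / m"
      using r by (simp add: field_simps max_def m_def split: if_splits)
    then have "r powr \<eta> * (r / max r a) \<le> m powr \<eta> * (2 * r / m)"
      using r \<eta> by (intro mult_mono powr_mono2) (auto simp: m_def)
    also have "\<dots> = 2 * r * m powr (\<eta> - 1)"
      using r by (simp add: powr_diff m_def)
    also have "\<dots> \<le> 2 * r * a' powr (\<eta> - 1)"
      using r a' \<eta> by (intro mult_left_mono powr_mono2') (auto simp: m_def)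
    finally show "r powr \<eta> * (r / max r \<bar>(z - w) \<bullet> b\<bar>) \<le> 2 * r * \<bar>(z - y) \<bullet> b\<bar> powr (\<eta> - 1)"
      unfolding a_def a'_def .
  qed
  also have "\<dots> = (2 * r) ^ DIM('a) * (\<Prod>b\<in>Basis. \<bar>(z - y) \<bullet> b\<bar> powr (\<eta> - 1))"
    by (simp add: prod.distrib)
  finally show ?thesis .
qed

lemma prod_kernel_le_nn_integral_cball:
  fixes z w :: "'a::euclidean_space" and r \<eta> :: real
  assumes r: "0 < r" and \<eta>: "0 < \<eta>" "\<eta> < 1"
  shows "ennreal (r powr (\<eta> * DIM('a)) * prod_kernel r (z - w))
    \<le> ennreal (2 ^ DIM('a) / unit_ball_vol DIM('a)) *
      (\<integral>\<^sup>+ y. (\<Prod>b\<in>Basis. singular_weight \<eta> ((z - y) \<bullet> b)) * indicator (cball w r) y \<partial>lborel)"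
proof -
  define D where "D = DIM('a)"
  define V where "V = unit_ball_vol D"
  define c where "c = r powr (\<eta> * D) * prod_kernel r (z - w) / (2 ^ D * r ^ D)"
  have V: "0 < V" by (simp add: V_def)
  have c: "0 \<le> c" using r prod_kernel_nonneg[OF r, of "z - w"] unfolding c_def by simp
  have "ennreal c \<le> (\<Prod>b\<in>Basis. singular_weight \<eta> ((z - y) \<bullet> b))" if y: "y \<in> cball w r" for y
  proof (cases "\<exists>b\<in>Basis. (z - y) \<bullet> b = 0")
    case True
    then show ?thesis
      by (subst ennreal_prod_eq_top[THEN iffD2]) (auto simp: singular_weight_def)
  next
    case False
    have "r powr (\<eta> * D) * prod_kernel r (z - w) \<le> (2 * r) ^ D * (\<Prod>b\<in>Basis. \<bar>(z - y) \<bullet> b\<bar> powr (\<eta> - 1))"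
      using prod_kernel_le_prod_abs_powr[OF r _ _ \<eta>, of w y z] y False unfolding D_def by auto
    then have "c \<le> (\<Prod>b\<in>Basis. \<bar>(z - y) \<bullet> b\<bar> powr (\<eta> - 1))"
      using r unfolding c_def by (simp add: divide_le_eq power_mult_distrib mult.commute)
    then show ?thesis
      using False by (auto simp: singular_weight_def prod_ennreal intro!: ennreal_leI)
  qed
  then have "ennreal c * emeasure lborel (cball w r)
      \<le> (\<integral>\<^sup>+ y. (\<Prod>b\<in>Basis. singular_weight \<eta> ((z - y) \<bullet> b)) * indicator (cball w r) y \<partial>lborel)"
    by (subst nn_integral_cmult_indicator[symmetric]) (auto intro!: nn_integral_mono simp: indicator_def)
  then have ball: "ennreal c * ennreal (V * r ^ D)
      \<le> (\<integral>\<^sup>+ y. (\<Prod>b\<in>Basis. singular_weight \<eta> ((z - y) \<bullet> b)) * indicator (cball w r) y \<partial>lborel)"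
    using r by (simp add: emeasure_cball V_def D_def)
  have "r powr (\<eta> * D) * prod_kernel r (z - w) = 2 ^ D / V * (c * (V * r ^ D))"
    using r V by (simp add: c_def field_simps)
  also have "ennreal \<dots> = ennreal (2 ^ D / V) * ennreal (c * (V * r ^ D))"
    using V c r by (intro ennreal_mult'') auto
  also have "ennreal (c * (V * r ^ D)) = ennreal c * ennreal (V * r ^ D)"
    using c by (rule ennreal_mult')
  finally show ?thesis
    using ball unfolding D_def V_def by (simp add: mult_left_mono)
qed

lemma nn_integral_count_space_indicator_disjoint:
  assumes "disjoint_family_on X I"
  shows "(\<integral>\<^sup>+ i. indicator (X i) x \<partial>count_space I) = indicator (\<Union>(X ` I)) x"
proof (cases "x \<in> \<Union>(X ` I)")
  case True
  then obtain j where j: "j \<in> I" "x \<in> X j" by auto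
  with assms have "\<And>i. i \<in> I \<Longrightarrow> indicator (X i) x = (indicator {j} i :: ennreal)"
    by (auto simp: disjoint_family_on_def split: split_indicator)
  with True j show ?thesis by (simp cong: nn_integral_cong_simp)
qed (auto simp: nn_integral_0_iff_AE)

definition packing_kernel_bound :: "nat \<Rightarrow> real \<Rightarrow> real \<Rightarrow> real" where
  "packing_kernel_bound D L e =
     2 ^ D / unit_ball_vol D * (2 * ((L + 1) powr (e / D) / (e / D)) + 2 * (L + 1) powr (e / D)) ^ D"

lemma cball_subset_cube:
  fixes c :: "'a::euclidean_space"
  assumes "\<forall>b\<in>Basis. \<bar>c \<bullet> b\<bar> \<le> L"
  shows "cball c \<rho> \<subseteq> {y. \<forall>b\<in>Basis. \<bar>y \<bullet> b\<bar> \<le> L + \<rho>}"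
proof clarify
  fix y and b :: 'a assume y: "y \<in> cball c \<rho>" and b: "b \<in> Basis"
  have "\<bar>(y - c) \<bullet> b\<bar> \<le> \<rho>"
    using Basis_le_norm[OF b, of "y - c"] y by (simp add: dist_norm norm_minus_commute)
  with assms b show "\<bar>y \<bullet> b\<bar> \<le> L + \<rho>" by (auto simp: inner_diff_left abs_le_iff)
qed

lemma packing_sum_prod_kernel_le:
  fixes z :: "'a::euclidean_space" and P :: "('a \<times> real) set" and e L :: real
  assumes P: "countable P" "disjoint_family_on (\<lambda>p. cball (fst p) (snd p)) P"
    and P_box: "\<And>p. p \<in> P \<Longrightarrow> (\<forall>b\<in>Basis. \<bar>fst p \<bullet> b\<bar> \<le> L) \<and> 0 < snd p \<and> snd p \<le> 1"
    and e: "0 < e" "e < DIM('a)" and L: "0 \<le> L"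
  shows "(\<integral>\<^sup>+ p. ennreal (snd p powr e * prod_kernel (snd p) (z - fst p)) \<partial>count_space P)
    \<le> ennreal (packing_kernel_bound DIM('a) L e)"
proof -
  define \<eta> where "\<eta> = e / DIM('a)"
  define F where "F y = (\<Prod>b\<in>Basis. singular_weight \<eta> ((z - y) \<bullet> b))" for y
  define box where "box = {y::'a. \<forall>b\<in>Basis. \<bar>y \<bullet> b\<bar> \<le> L + 1}"
  define c where "c = ennreal (2 ^ DIM('a) / unit_ball_vol DIM('a))"
  have \<eta>: "0 < \<eta>" "\<eta> < 1" and e_eq: "e = \<eta> * DIM('a)"
    using e by (auto simp: \<eta>_def field_simps)
  have [measurable]: "F \<in> borel_measurable borel"
    unfolding F_def by measurable
  have union_box: "(\<Union>p\<in>P. cball (fst p) (snd p)) \<subseteq> box"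
  proof (rule UN_least)
    fix p assume p: "p \<in> P"
    then have "cball (fst p) (snd p) \<subseteq> {y. \<forall>b\<in>Basis. \<bar>y \<bullet> b\<bar> \<le> L + snd p}"
      using P_box by (intro cball_subset_cube) auto
    also have "\<dots> \<subseteq> box" using P_box[OF p] unfolding box_def by force
    finally show "cball (fst p) (snd p) \<subseteq> box" .
  qed
  have "(\<integral>\<^sup>+ p. ennreal (snd p powr e * prod_kernel (snd p) (z - fst p)) \<partial>count_space P)
      \<le> (\<integral>\<^sup>+ p. c * (\<integral>\<^sup>+ y. F y * indicator (cball (fst p) (snd p)) y \<partial>lborel) \<partial>count_space P)"
    unfolding c_def F_def e_eq using P_box \<eta> by (intro nn_integral_mono prod_kernel_le_nn_integral_cball) auto
  also have "\<dots> = c * (\<integral>\<^sup>+ p. (\<integral>\<^sup>+ y. F y * indicator (cball (fst p) (snd p)) y \<partial>lborel) \<partial>count_space P)"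
    by (rule nn_integral_cmult) auto
  also have "(\<integral>\<^sup>+ p. (\<integral>\<^sup>+ y. F y * indicator (cball (fst p) (snd p)) y \<partial>lborel) \<partial>count_space P) =
      (\<integral>\<^sup>+ y. F y * indicator (\<Union>p\<in>P. cball (fst p) (snd p)) y \<partial>lborel)"
    using P by (simp add: nn_integral_count_space_nn_integral[symmetric] nn_integral_cmult
        nn_integral_count_space_indicator_disjoint)
  also have "\<dots> \<le> (\<integral>\<^sup>+ y. F y * indicator box y \<partial>lborel)"
    using union_box by (intro nn_integral_mono mult_left_mono) (auto split: split_indicator simp: subset_iff)
  also have "\<dots> \<le> ennreal ((2 * ((L + 1) powr \<eta> / \<eta>) + 2 * (L + 1) powr \<eta>) ^ DIM('a))"
    unfolding F_def box_def using \<eta> L by (intro nn_integral_singular_weight_box_le) auto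
  finally have "(\<integral>\<^sup>+ p. ennreal (snd p powr e * prod_kernel (snd p) (z - fst p)) \<partial>count_space P)
      \<le> c * ennreal ((2 * ((L + 1) powr \<eta> / \<eta>) + 2 * (L + 1) powr \<eta>) ^ DIM('a))"
    by (simp add: mult_left_mono)
  also have "\<dots> = ennreal (packing_kernel_bound DIM('a) L e)"
    unfolding c_def packing_kernel_bound_def \<eta>_def using L e by (simp flip: ennreal_mult)
  finally show ?thesis .
qed

subsection \<open>Kernel integrals of a finite measure\<close>

definition kernel_integral :: "'a::euclidean_space measure \<Rightarrow> 'a \<Rightarrow> real \<Rightarrow> real" where
  "kernel_integral \<nu> w r = (LINT z|\<nu>. prod_kernel r (z - w))"

(* Restricting to rational radii makes the set Borel. *)
definition kernel_growth_set :: "'a::euclidean_space measure \<Rightarrow> real \<Rightarrow> real \<Rightarrow> 'a set" where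
  "kernel_growth_set \<nu> \<gamma> \<kappa> =
     {w. \<forall>q\<in>\<rat>. 0 < q \<and> q < 1 / \<kappa> \<longrightarrow> q powr \<gamma> / \<kappa> \<le> kernel_integral \<nu> w q}"

lemma kernel_integral_distr:
  assumes h: "h \<in> M \<rightarrow>\<^sub>M borel" and r: "0 < r"
  shows "kernel_integral (distr M borel h) w r = (LINT y|M. prod_kernel r (h y - w))"
  unfolding kernel_integral_def by (rule integral_distr[OF h borel_measurable_prod_kernel_shift[OF r]])

context
  fixes \<nu> :: "'a::euclidean_space measure"
  assumes fin: "finite_measure \<nu>" and sets_\<nu>: "sets \<nu> = sets borel"
begin

interpretation finite_measure \<nu> by (rule fin)

lemma measurable_prod_kernel_shift: "0 < r \<Longrightarrow> (\<lambda>z. prod_kernel r (z - w)) \<in> borel_measurable \<nu>"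
  using borel_measurable_prod_kernel_shift measurable_cong_sets[OF sets_\<nu> refl] by blast

lemma integrable_prod_kernel_shift: "0 < r \<Longrightarrow> integrable \<nu> (\<lambda>z. prod_kernel r (z - w))"
  by (intro integrable_const_bound[where B=1] measurable_prod_kernel_shift)
     (auto simp: prod_kernel_le_1 prod_kernel_nonneg)

lemma kernel_integral_nonneg: "0 < r \<Longrightarrow> 0 \<le> kernel_integral \<nu> w r"
  unfolding kernel_integral_def by (intro integral_nonneg_AE) (auto intro: prod_kernel_nonneg)

lemma kernel_integral_mono: "0 < r \<Longrightarrow> r \<le> r' \<Longrightarrow> kernel_integral \<nu> w r \<le> kernel_integral \<nu> w r'"
  unfolding kernel_integral_def by (intro integral_mono integrable_prod_kernel_shift prod_kernel_mono) auto

lemma kernel_integral_le_measure_space: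
  assumes r: "0 < r" shows "kernel_integral \<nu> w r \<le> measure \<nu> (space \<nu>)"
proof -
  have "kernel_integral \<nu> w r \<le> (LINT z|\<nu>. 1)"
    unfolding kernel_integral_def using r
    by (intro integral_mono integrable_prod_kernel_shift) (auto simp: prod_kernel_le_1)
  then show ?thesis by simp
qed

lemma measure_cball_le_kernel_integral:
  assumes r: "0 < r" shows "measure \<nu> (cball w r) \<le> kernel_integral \<nu> w r"
proof -
  have "measure \<nu> (cball w r) = (LINT z|\<nu>. indicator (cball w r) z)"
    using sets_\<nu> by simp
  also have "\<dots> \<le> kernel_integral \<nu> w r"
    unfolding kernel_integral_def
  proof (rule integral_mono)
    show "integrable \<nu> (\<lambda>z. indicator (cball w r) z :: real)"
      using sets_\<nu> by (intro integrable_const_bound[where B=1]) (auto simp: indicator_def)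
    fix z
    show "indicator (cball w r) z \<le> prod_kernel r (z - w)"
      using r prod_kernel_eq_1_of_norm_le[OF r, of "z - w"]
      by (auto simp: indicator_def prod_kernel_nonneg dist_norm norm_minus_commute)
  qed (rule integrable_prod_kernel_shift[OF r])
  finally show ?thesis .
qed

lemma borel_measurable_kernel_integral: "0 < r \<Longrightarrow> (\<lambda>w. kernel_integral \<nu> w r) \<in> borel_measurable borel"
proof -
  assume r: "0 < r"
  have "(\<lambda>p::'a \<times> 'a. prod_kernel r (snd p - fst p)) \<in> borel_measurable (borel \<Otimes>\<^sub>M borel)"
    unfolding borel_prod using r
    by (intro borel_measurable_continuous_onI continuous_on_compose2[OF continuous_on_prod_kernel]
          continuous_intros) auto
  then have "(\<lambda>p::'a \<times> 'a. prod_kernel r (snd p - fst p)) \<in> borel_measurable (borel \<Otimes>\<^sub>M \<nu>)"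
    using measurable_cong_sets[OF sets_pair_measure_cong[OF refl sets_\<nu>] refl] by blast
  then have "case_prod (\<lambda>w z. prod_kernel r (z - w)) \<in> borel_measurable (borel \<Otimes>\<^sub>M \<nu>)"
    by (simp add: case_prod_beta')
  then show ?thesis unfolding kernel_integral_def by (rule borel_measurable_lebesgue_integral)
qed

lemma sets_kernel_growth_set: "kernel_growth_set \<nu> \<gamma> \<kappa> \<in> sets borel"
proof -
  have "kernel_growth_set \<nu> \<gamma> \<kappa> =
      (\<Inter>q\<in>{q\<in>\<rat>. 0 < q \<and> q < 1 / \<kappa>}. {w. q powr \<gamma> / \<kappa> \<le> kernel_integral \<nu> w q})"
    unfolding kernel_growth_set_def by auto
  also have "\<dots> \<in> sets borel"
  proof (rule sets.countable_INT'')
    show "countable {q\<in>\<rat>. 0 < q \<and> q < 1 / \<kappa>}"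
      by (rule countable_subset[OF _ countable_rat]) auto
    fix q assume "q \<in> {q\<in>\<rat>. 0 < q \<and> q < 1 / \<kappa>}"
    then have [measurable]: "(\<lambda>w. kernel_integral \<nu> w q) \<in> borel_measurable borel"
      by (intro borel_measurable_kernel_integral) auto
    show "{w. q powr \<gamma> / \<kappa> \<le> kernel_integral \<nu> w q} \<in> sets borel" by measurable
  qed auto
  finally show ?thesis .
qed

lemma kernel_growth_set_bound:
  assumes w: "w \<in> kernel_growth_set \<nu> \<gamma> \<kappa>" and \<kappa>: "0 < \<kappa>" and \<gamma>: "0 \<le> \<gamma>"
    and r: "0 < r" "r \<le> 1 / (2 * \<kappa>)"
  shows "r powr \<gamma> \<le> 2 powr \<gamma> * \<kappa> * kernel_integral \<nu> w r"
proof -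
  obtain q where q: "q \<in> \<rat>" "r / 2 < q" "q < r" using Rats_dense_in_real[of "r / 2" r] r by auto
  have "r < 1 / \<kappa>" using r \<kappa> by (auto simp: field_simps)
  then have "q powr \<gamma> / \<kappa> \<le> kernel_integral \<nu> w q"
    using w q r unfolding kernel_growth_set_def by auto
  also have "\<dots> \<le> kernel_integral \<nu> w r" using q r by (intro kernel_integral_mono) auto
  finally have "q powr \<gamma> \<le> \<kappa> * kernel_integral \<nu> w r" using \<kappa> by (simp add: field_simps)
  moreover have "(r / 2) powr \<gamma> \<le> q powr \<gamma>" using q r \<gamma> by (intro powr_mono2) auto
  moreover have "r powr \<gamma> = 2 powr \<gamma> * (r / 2) powr \<gamma>" by (simp add: powr_divide)
  ultimately show ?thesis by (simp add: mult.assoc)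
qed

lemma packing_sum_kernel_integral_le:
  fixes P :: "('a \<times> real) set" and e L :: real
  assumes P: "countable P" "disjoint_family_on (\<lambda>p. cball (fst p) (snd p)) P"
    and P_box: "\<And>p. p \<in> P \<Longrightarrow> (\<forall>b\<in>Basis. \<bar>fst p \<bullet> b\<bar> \<le> L) \<and> 0 < snd p \<and> snd p \<le> 1"
    and e: "0 < e" "e < DIM('a)" and L: "0 \<le> L"
  shows "(\<integral>\<^sup>+ p. ennreal (snd p powr e * kernel_integral \<nu> (fst p) (snd p)) \<partial>count_space P)
    \<le> ennreal (packing_kernel_bound DIM('a) L e * measure \<nu> (space \<nu>))"
proof -
  have "(\<integral>\<^sup>+ p. ennreal (snd p powr e * kernel_integral \<nu> (fst p) (snd p)) \<partial>count_space P) =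
      (\<integral>\<^sup>+ p. (\<integral>\<^sup>+ z. ennreal (snd p powr e * prod_kernel (snd p) (z - fst p)) \<partial>\<nu>) \<partial>count_space P)"
  proof (intro nn_integral_cong)
    fix p assume "p \<in> space (count_space P)"
    then have r: "0 < snd p" using P_box by auto
    have "(\<integral>\<^sup>+ z. ennreal (snd p powr e * prod_kernel (snd p) (z - fst p)) \<partial>\<nu>)
        = ennreal (LINT z|\<nu>. snd p powr e * prod_kernel (snd p) (z - fst p))"
      using r by (intro nn_integral_eq_integral integrable_mult_right integrable_prod_kernel_shift)
        (auto intro!: AE_I2 mult_nonneg_nonneg prod_kernel_nonneg)
    then show "ennreal (snd p powr e * kernel_integral \<nu> (fst p) (snd p))
        = (\<integral>\<^sup>+ z. ennreal (snd p powr e * prod_kernel (snd p) (z - fst p)) \<partial>\<nu>)"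
      by (simp add: kernel_integral_def)
  qed
  also have "\<dots> = (\<integral>\<^sup>+ z. (\<integral>\<^sup>+ p. ennreal (snd p powr e * prod_kernel (snd p) (z - fst p)) \<partial>count_space P) \<partial>\<nu>)"
    using P(1) P_box measurable_prod_kernel_shift
    by (intro nn_integral_count_space_nn_integral[symmetric]) auto
  also have "\<dots> \<le> (\<integral>\<^sup>+ z. ennreal (packing_kernel_bound DIM('a) L e) \<partial>\<nu>)"
    using P P_box e L by (intro nn_integral_mono packing_sum_prod_kernel_le) auto
  also have "\<dots> = ennreal (packing_kernel_bound DIM('a) L e * measure \<nu> (space \<nu>))"
    by (simp add: emeasure_eq_measure ennreal_mult'')
  finally show ?thesis .
qed

lemma kernel_growth_set_powr_le:
  assumes w: "w \<in> kernel_growth_set \<nu> \<gamma> \<kappa>" and \<gamma>: "0 \<le> \<gamma>" and \<kappa>: "0 < \<kappa>"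
    and e: "0 \<le> e" "0 \<le> e0" and r: "0 < r" "r \<le> \<delta>" "\<delta> \<le> 1 / (2 * \<kappa>)"
  shows "(2 * r) powr (\<gamma> + e + e0)
    \<le> 2 powr (\<gamma> + e + e0 + \<gamma>) * \<kappa> * \<delta> powr e0 * (r powr e * kernel_integral \<nu> w r)"
proof -
  have G: "r powr \<gamma> \<le> 2 powr \<gamma> * \<kappa> * kernel_integral \<nu> w r"
    using kernel_growth_set_bound[OF w \<kappa> \<gamma> r(1) order_trans[OF r(2,3)]] .
  have "(2 * r) powr (\<gamma> + e + e0) = 2 powr (\<gamma> + e + e0) * (r powr e0 * (r powr e * r powr \<gamma>))"
    using r by (simp add: powr_mult add_ac flip: powr_add)
  also have "\<dots> \<le> 2 powr (\<gamma> + e + e0) * (\<delta> powr e0 * (r powr e * (2 powr \<gamma> * \<kappa> * kernel_integral \<nu> w r)))"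
    using r e G by (intro mult_left_mono mult_mono powr_mono2) auto
  also have "\<dots> = 2 powr (\<gamma> + e + e0 + \<gamma>) * \<kappa> * \<delta> powr e0 * (r powr e * kernel_integral \<nu> w r)"
    unfolding powr_add[of 2 "\<gamma> + e + e0" \<gamma>] by (simp add: mult_ac)
  finally show ?thesis .
qed

lemma packing_pre_delta_kernel_growth_set_le:
  fixes e e0 :: real
  assumes \<gamma>: "0 \<le> \<gamma>" and \<kappa>: "0 < \<kappa>" and L: "0 \<le> L" and e: "0 < e" "e < DIM('a)" "0 \<le> e0"
    and \<delta>: "0 < \<delta>" "\<delta> \<le> 1" "\<delta> \<le> 1 / (2 * \<kappa>)"
    and A: "A \<subseteq> kernel_growth_set \<nu> \<gamma> \<kappa> \<inter> {w. \<forall>b\<in>Basis. \<bar>w \<bullet> b\<bar> \<le> L}"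
  shows "packing_pre_delta (\<gamma> + e + e0) \<delta> A \<le> ennreal (2 powr (\<gamma> + e + e0 + \<gamma>) * \<kappa> * \<delta> powr e0 *
      (packing_kernel_bound DIM('a) L e * measure \<nu> (space \<nu>)))"
  unfolding packing_pre_delta_def
proof (rule SUP_least)
  define c where "c = 2 powr (\<gamma> + e + e0 + \<gamma>) * \<kappa> * \<delta> powr e0"
  have c: "0 \<le> c" using \<kappa> by (simp add: c_def)
  fix P assume "P \<in> {P. countable P \<and> P \<subseteq> A \<times> {0<..\<delta>} \<and>
      (\<forall>p\<in>P. \<forall>q\<in>P. p \<noteq> q \<longrightarrow> cball (fst p) (snd p) \<inter> cball (fst q) (snd q) = {})}"
  then have P: "countable P" "disjoint_family_on (\<lambda>p. cball (fst p) (snd p)) P"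
    and P_A: "\<And>p. p \<in> P \<Longrightarrow> fst p \<in> A \<and> 0 < snd p \<and> snd p \<le> \<delta>"
    by (auto simp: disjoint_family_on_def mem_Times_iff subset_iff)
  have summand: "ennreal ((2 * snd p) powr (\<gamma> + e + e0))
      \<le> ennreal c * ennreal (snd p powr e * kernel_integral \<nu> (fst p) (snd p))" if p: "p \<in> P" for p
  proof -
    have "(2 * snd p) powr (\<gamma> + e + e0) \<le> c * (snd p powr e * kernel_integral \<nu> (fst p) (snd p))"
      unfolding c_def using P_A[OF p] A \<gamma> \<kappa> e \<delta> by (intro kernel_growth_set_powr_le) auto
    then show ?thesis
      using c P_A[OF p] kernel_integral_nonneg by (simp add: ennreal_mult[symmetric] ennreal_leI)
  qed
  have "(\<integral>\<^sup>+ p. ennreal ((2 * snd p) powr (\<gamma> + e + e0)) \<partial>count_space P)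
      \<le> (\<integral>\<^sup>+ p. ennreal c * ennreal (snd p powr e * kernel_integral \<nu> (fst p) (snd p)) \<partial>count_space P)"
    using summand by (intro nn_integral_mono) auto
  also have "\<dots> = ennreal c * (\<integral>\<^sup>+ p. ennreal (snd p powr e * kernel_integral \<nu> (fst p) (snd p)) \<partial>count_space P)"
    by (rule nn_integral_cmult) auto
  also have "\<dots> \<le> ennreal c * ennreal (packing_kernel_bound DIM('a) L e * measure \<nu> (space \<nu>))"
    using P P_A A \<delta> e L by (intro mult_left_mono packing_sum_kernel_integral_le) force+
  also have "\<dots> = ennreal (c * (packing_kernel_bound DIM('a) L e * measure \<nu> (space \<nu>)))"
    using c by (simp add: ennreal_mult')
  finally show "(\<integral>\<^sup>+ p. ennreal ((2 * snd p) powr (\<gamma> + e + e0)) \<partial>count_space P)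
      \<le> ennreal (2 powr (\<gamma> + e + e0 + \<gamma>) * \<kappa> * \<delta> powr e0 *
          (packing_kernel_bound DIM('a) L e * measure \<nu> (space \<nu>)))"
    by (simp add: c_def)
qed

lemma packing_premeasure_kernel_growth_set_eq_0:
  assumes \<gamma>: "0 \<le> \<gamma>" "\<gamma> < t" and \<kappa>: "0 < \<kappa>" and L: "0 \<le> L"
    and A: "A \<subseteq> kernel_growth_set \<nu> \<gamma> \<kappa> \<inter> {w. \<forall>b\<in>Basis. \<bar>w \<bullet> b\<bar> \<le> L}"
  shows "packing_premeasure t A = 0"
proof -
  define e where "e = min (t - \<gamma>) 1 / 2"
  define e0 where "e0 = t - \<gamma> - e"
  define K where "K = 2 powr (t + \<gamma>) * \<kappa> * (packing_kernel_bound DIM('a) L e * measure \<nu> (space \<nu>))"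
  have e: "0 < e" "0 < e0" and t: "t = \<gamma> + e + e0"
    using \<gamma> by (auto simp: e_def e0_def min_def)
  have "e \<le> 1 / 2" by (simp add: e_def)
  moreover have "(1::real) \<le> DIM('a)" using DIM_positive[where 'a='a] by linarith
  ultimately have eD: "e < DIM('a)" by linarith
  have "\<forall>\<^sub>F \<delta> in at_right 0. 0 < \<delta> \<and> \<delta> \<le> 1 \<and> \<delta> \<le> 1 / (2 * \<kappa>)"
    using \<kappa> unfolding eventually_at_right_field by (intro exI[of _ "min 1 (1 / (2 * \<kappa>))"]) auto
  then have "\<forall>\<^sub>F \<delta> in at_right 0. packing_premeasure t A \<le> ennreal (\<delta> powr e0 * K)"
  proof eventually_elim
    case (elim \<delta>)
    have "packing_premeasure t A \<le> packing_pre_delta t \<delta> A"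
      unfolding packing_premeasure_def using elim by (intro INF_lower) auto
    also have "\<dots> \<le> ennreal (\<delta> powr e0 * K)"
      using packing_pre_delta_kernel_growth_set_le[OF \<gamma>(1) \<kappa> L e(1) eD _ _ _ _ A, of e0 \<delta>] elim e(2)
      by (simp add: t K_def ac_simps)
    finally show ?case .
  qed
  moreover have "((\<lambda>\<delta>. ennreal (\<delta> powr e0 * K)) \<longlongrightarrow> ennreal (0 * K)) (at_right 0)"
    using e(2) by (intro tendsto_ennrealI tendsto_mult_right tendsto_zero_powrI)
      (auto intro: tendsto_ident_at eventually_at_rightI[of 0 1])
  ultimately have "packing_premeasure t A \<le> 0"
    using tendsto_le[OF trivial_limit_at_right_real _ tendsto_const] by fastforce
  then show ?thesis by simp
qed

lemma packing_measure_kernel_growth_set_eq_0: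
  assumes "0 \<le> \<gamma>" "\<gamma> < t" "0 < \<kappa>"
  shows "packing_measure t (kernel_growth_set \<nu> \<gamma> \<kappa>) = 0"
proof -
  define A where "A i = kernel_growth_set \<nu> \<gamma> \<kappa> \<inter> {w. \<forall>b\<in>Basis. \<bar>w \<bullet> b\<bar> \<le> real i}" for i :: nat
  have "kernel_growth_set \<nu> \<gamma> \<kappa> \<subseteq> (\<Union>i. A i)"
  proof
    fix w assume "w \<in> kernel_growth_set \<nu> \<gamma> \<kappa>"
    moreover obtain i :: nat where "norm w \<le> real i" using real_arch_simple by blast
    ultimately show "w \<in> (\<Union>i. A i)"
      by (auto simp: A_def intro: order_trans[OF Basis_le_norm])
  qed
  then have "packing_measure t (kernel_growth_set \<nu> \<gamma> \<kappa>) \<le> (\<Sum>i. packing_premeasure t (A i))"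
    unfolding packing_measure_def by (intro INF_lower) auto
  also have "\<dots> = 0"
  proof -
    have "packing_premeasure t (A i) = 0" for i
      using packing_premeasure_kernel_growth_set_eq_0[OF assms, of "real i" "A i"] by (auto simp: A_def)
    then show ?thesis by simp
  qed
  finally show ?thesis by simp
qed

lemma emeasure_kernel_growth_set_eq_0:
  assumes \<gamma>: "0 \<le> \<gamma>" "ereal \<gamma> < packing_dim_measure \<nu>" and \<kappa>: "0 < \<kappa>"
  shows "emeasure \<nu> (kernel_growth_set \<nu> \<gamma> \<kappa>) = 0"
proof (rule ccontr)
  obtain t where t: "\<gamma> < t" "ereal t < packing_dim_measure \<nu>"
    using ereal_dense2[OF \<gamma>(2)] by auto
  assume "emeasure \<nu> (kernel_growth_set \<nu> \<gamma> \<kappa>) \<noteq> 0"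
  then have "packing_dim_measure \<nu> \<le> packing_dim (kernel_growth_set \<nu> \<gamma> \<kappa>)"
    unfolding packing_dim_measure_def using sets_kernel_growth_set sets_\<nu>
    by (intro INF_lower) (auto simp: zero_less_iff_neq_zero)
  also have "\<dots> \<le> ereal t"
    unfolding packing_dim_def using \<gamma>(1) t(1) \<kappa> packing_measure_kernel_growth_set_eq_0
    by (intro Inf_lower) auto
  finally show False using t(2) by simp
qed

end

subsection \<open>Packing dimension of a push-forward measure\<close>

lemma ex_kernel_growth_set_of_Liminf_neq_0:
  assumes q: "\<And>r. 0 < r \<Longrightarrow> 0 \<le> q r \<and> q r \<le> kernel_integral \<nu> w r"
    and lim: "Liminf (at_right 0) (\<lambda>r. ereal (r powr (-\<gamma>) * q r)) \<noteq> 0"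
  shows "\<exists>k. w \<in> kernel_growth_set \<nu> \<gamma> (Suc k)"
proof -
  have "0 \<le> Liminf (at_right 0) (\<lambda>r. ereal (r powr (-\<gamma>) * q r))"
    using q by (intro Liminf_bounded eventually_at_rightI[of 0 1]) auto
  with lim obtain c where c: "0 < c" "ereal c < Liminf (at_right 0) (\<lambda>r. ereal (r powr (-\<gamma>) * q r))"
    using ereal_dense2[of 0] by (metis ereal_less(2) order.not_eq_order_implies_strict)
  have "\<forall>\<^sub>F r in at_right 0. ereal c < ereal (r powr (-\<gamma>) * q r)"
    using c(2) by (rule less_LiminfD)
  then obtain b where b: "0 < b" "\<And>r. 0 < r \<Longrightarrow> r < b \<Longrightarrow> c < r powr (-\<gamma>) * q r"
    unfolding eventually_at_right_field by auto
  obtain k :: nat where k: "inverse (real (Suc k)) < min b c"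
    using reals_Archimedean[of "min b c"] b c by auto
  have "w \<in> kernel_growth_set \<nu> \<gamma> (Suc k)"
    unfolding kernel_growth_set_def
  proof (intro CollectI ballI impI)
    fix r :: real assume "r \<in> \<rat>" and r: "0 < r \<and> r < 1 / real (Suc k)"
    then have "c < r powr (-\<gamma>) * q r"
      using b(2) k by (simp add: divide_inverse)
    then have cq: "c * r powr \<gamma> < q r"
      using r by (simp add: powr_minus field_simps)
    have "r powr \<gamma> / real (Suc k) = r powr \<gamma> * inverse (real (Suc k))"
      by (simp add: divide_inverse)
    also have "\<dots> \<le> c * r powr \<gamma>"
      using k by (subst mult.commute, intro mult_right_mono) auto
    also have "\<dots> \<le> kernel_integral \<nu> w r"
      using cq q[of r] r by linarith
    finally show "r powr \<gamma> / real (Suc k) \<le> kernel_integral \<nu> w r" .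
  qed
  then show ?thesis ..
qed

lemma AE_Liminf_eq_0_below_packing_dim:
  fixes h :: "'m \<Rightarrow> 'a::euclidean_space"
  assumes M: "prob_space M" and h: "h \<in> M \<rightarrow>\<^sub>M borel"
    and Q: "\<And>x r. x \<in> space M \<Longrightarrow> 0 < r \<Longrightarrow> 0 \<le> Q x r \<and> Q x r \<le> kernel_integral (distr M borel h) (h x) r"
    and \<gamma>: "0 \<le> \<gamma>" "ereal \<gamma> < packing_dim_measure (distr M borel h)"
  shows "AE x in M. Liminf (at_right 0) (\<lambda>r. ereal (r powr (-\<gamma>) * Q x r)) = 0"
proof -
  define \<nu> where "\<nu> = distr M borel h"
  interpret M: prob_space M by fact
  have fin: "finite_measure \<nu>"
    unfolding \<nu>_def using M.prob_space_distr[OF h] by (simp add: prob_space_def)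
  have sets_\<nu>: "sets \<nu> = sets borel" unfolding \<nu>_def by simp
  have "AE w in \<nu>. \<forall>k. w \<notin> kernel_growth_set \<nu> \<gamma> (Suc k)"
    using emeasure_kernel_growth_set_eq_0[OF fin sets_\<nu> \<gamma>(1) \<gamma>(2)[folded \<nu>_def]]
      sets_kernel_growth_set[OF fin sets_\<nu>] sets_\<nu>
    by (auto simp: AE_all_countable intro!: AE_not_in)
  then have "AE x in M. \<forall>k. h x \<notin> kernel_growth_set \<nu> \<gamma> (Suc k)"
    unfolding \<nu>_def by (rule AE_distrD[OF h])
  with AE_space show ?thesis
  proof eventually_elim
    case (elim x)
    with ex_kernel_growth_set_of_Liminf_neq_0[OF Q[OF elim(1)]] show ?case
      unfolding \<nu>_def by blast
  qed
qed

lemma AE_Liminf_eq_0_of_neg: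
  fixes h :: "'m \<Rightarrow> 'a::euclidean_space"
  assumes M: "prob_space M" and h: "h \<in> M \<rightarrow>\<^sub>M borel"
    and Q: "\<And>x r. x \<in> space M \<Longrightarrow> 0 < r \<Longrightarrow> 0 \<le> Q x r \<and> Q x r \<le> kernel_integral (distr M borel h) (h x) r"
    and \<gamma>: "\<gamma> < 0"
  shows "AE x in M. Liminf (at_right 0) (\<lambda>r. ereal (r powr (-\<gamma>) * Q x r)) = 0"
proof (rule AE_I2)
  fix x assume x: "x \<in> space M"
  define \<nu> where "\<nu> = distr M borel h"
  interpret M: prob_space M by fact
  have \<nu>: "prob_space \<nu>" unfolding \<nu>_def by (rule M.prob_space_distr[OF h])
  then have fin: "finite_measure \<nu>" by (simp add: prob_space_def)
  have sets_\<nu>: "sets \<nu> = sets borel" unfolding \<nu>_def by simp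
  have Q1: "0 \<le> Q x r \<and> Q x r \<le> 1" if r: "0 < r" for r
  proof -
    have "Q x r \<le> kernel_integral \<nu> (h x) r" using Q[OF x r] by (simp add: \<nu>_def)
    also have "\<dots> \<le> 1"
      using kernel_integral_le_measure_space[OF fin sets_\<nu> r] \<nu> by (simp add: prob_space.prob_space)
    finally show ?thesis using Q[OF x r] by simp
  qed
  have lim0: "((\<lambda>r::real. r powr (-\<gamma>)) \<longlongrightarrow> 0) (at_right 0)"
    using \<gamma> by (intro tendsto_zero_powrI) (auto intro: tendsto_ident_at eventually_at_rightI[of 0 1])
  have "((\<lambda>r. r powr (-\<gamma>) * Q x r) \<longlongrightarrow> 0) (at_right 0)"
  proof (rule tendsto_sandwich[OF _ _ tendsto_const lim0])
    show "\<forall>\<^sub>F r in at_right 0. 0 \<le> r powr (-\<gamma>) * Q x r"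
      using Q1 by (intro eventually_at_rightI[of 0 1]) auto
    show "\<forall>\<^sub>F r in at_right 0. r powr (-\<gamma>) * Q x r \<le> r powr (-\<gamma>)"
      using Q1 by (intro eventually_at_rightI[of 0 1]) (auto intro: mult_left_le)
  qed
  then have "((\<lambda>r. ereal (r powr (-\<gamma>) * Q x r)) \<longlongrightarrow> 0) (at_right 0)"
    by (simp add: zero_ereal_def tendsto_ereal)
  then show "Liminf (at_right 0) (\<lambda>r. ereal (r powr (-\<gamma>) * Q x r)) = 0"
    by (rule lim_imp_Liminf[OF trivial_limit_at_right_real])
qed

theorem packing_dim_measure_distr_eq_Sup_Liminf:
  fixes h :: "'m \<Rightarrow> 'a::euclidean_space"
  assumes M: "prob_space M" and h: "h \<in> M \<rightarrow>\<^sub>M borel"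
    and Q_ge: "\<And>x r. x \<in> space M \<Longrightarrow> 0 < r \<Longrightarrow> measure (distr M borel h) (cball (h x) r) \<le> Q x r"
    and Q_le: "\<And>x r. x \<in> space M \<Longrightarrow> 0 < r \<Longrightarrow> Q x r \<le> kernel_integral (distr M borel h) (h x) r"
  shows "packing_dim_measure (distr M borel h) =
     Sup {ereal \<gamma> | \<gamma>. AE x in M. Liminf (at_right 0) (\<lambda>r. ereal (r powr (-\<gamma>) * Q x r)) = 0}"
proof (rule antisym)
  have Q: "0 \<le> Q x r \<and> Q x r \<le> kernel_integral (distr M borel h) (h x) r"
    if "x \<in> space M" "0 < r" for x r
    using Q_ge[OF that] Q_le[OF that] measure_nonneg order_trans by blast
  show "packing_dim_measure (distr M borel h) \<le>
      Sup {ereal \<gamma> | \<gamma>. AE x in M. Liminf (at_right 0) (\<lambda>r. ereal (r powr (-\<gamma>) * Q x r)) = 0}"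
  proof (rule dense_le)
    fix y assume "y < packing_dim_measure (distr M borel h)"
    then obtain \<gamma> where \<gamma>: "y < ereal \<gamma>" "ereal \<gamma> < packing_dim_measure (distr M borel h)"
      using ereal_dense2 by blast
    have "AE x in M. Liminf (at_right 0) (\<lambda>r. ereal (r powr (-\<gamma>) * Q x r)) = 0"
      using AE_Liminf_eq_0_below_packing_dim[OF M h Q _ \<gamma>(2)] AE_Liminf_eq_0_of_neg[OF M h Q]
      by (cases "0 \<le> \<gamma>") auto
    with \<gamma>(1) show "y \<le> Sup {ereal \<gamma> | \<gamma>. AE x in M. Liminf (at_right 0) (\<lambda>r. ereal (r powr (-\<gamma>) * Q x r)) = 0}"
      by (auto intro!: Sup_upper2)
  qed
  show "Sup {ereal \<gamma> | \<gamma>. AE x in M. Liminf (at_right 0) (\<lambda>r. ereal (r powr (-\<gamma>) * Q x r)) = 0}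
      \<le> packing_dim_measure (distr M borel h)"
    unfolding packing_dim_measure_def
    using ereal_le_packing_dim_of_AE_Liminf[OF M h Q_ge] by (auto intro!: Sup_least INF_greatest)
qed

subsection \<open>The two formulas\<close>

lemma closed_Dmax: "closed (Dmax x r)"
proof -
  have "Dmax x r = (\<Inter>i. {y. \<bar>y $ i - x $ i\<bar> \<le> r})" by (auto simp: Dmax_def)
  also have "closed \<dots>" by (intro closed_INT ballI closed_Collect_le continuous_intros)
  finally show ?thesis .
qed

lemma packing_dim_measure_distr_eq_Sup_I_d_f:
  fixes f :: "real^'n \<Rightarrow> real^'d" and M :: "(real^'n) measure"
  assumes M: "prob_space M" and sets_M: "sets M = sets borel" and f: "f \<in> borel_measurable borel"
  shows "packing_dim_measure (distr M borel f) =
    Sup {ereal \<gamma> | \<gamma>. AE x in M. Liminf (at_right 0) (\<lambda>r. ereal (r powr (-\<gamma>) * (LINT y|M. I_d_f f x y r))) = 0}"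
proof -
  interpret prob_space M by fact
  have fM: "f \<in> M \<rightarrow>\<^sub>M borel" using f measurable_cong_sets[OF sets_M refl] by blast
  have fin: "finite_measure (distr M borel f)"
    using prob_space_distr[OF fM] by (simp add: prob_space_def)
  have eq: "(LINT y|M. I_d_f f x y r) = kernel_integral (distr M borel f) (f x) r" if "0 < r" for x r
    using that by (simp add: I_d_f_eq_prod_kernel kernel_integral_distr[OF fM])
  show ?thesis
    using eq measure_cball_le_kernel_integral[OF fin]
    by (intro packing_dim_measure_distr_eq_Sup_Liminf[OF M fM]) auto
qed

lemma set_integral_I_d_f_eq:
  assumes "0 < r"
  shows "(LINT y:Dmax x r|M. I_d_f f x y r) = (LINT y|M. indicator (Dmax x r) y * prod_kernel r (f y - f x))"
  using assms unfolding set_lebesgue_integral_def by (simp add: I_d_f_eq_prod_kernel)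

context
  fixes f :: "real^'n \<Rightarrow> real^'d" and M :: "(real^'n) measure"
  assumes M: "finite_measure M" and sets_M: "sets M = sets borel" and f: "f \<in> borel_measurable borel"
begin

interpretation finite_measure M by (rule M)

lemma measurable_graph_map[measurable]: "graph_map f \<in> M \<rightarrow>\<^sub>M borel"
  and measurable_f[measurable]: "f \<in> M \<rightarrow>\<^sub>M borel"
  and measurable_Dmax[measurable]: "Dmax x r \<in> sets M"
proof -
  show fM: "f \<in> M \<rightarrow>\<^sub>M borel" using f measurable_cong_sets[OF sets_M refl] by blast
  have "(\<lambda>x. x) \<in> M \<rightarrow>\<^sub>M borel" using measurable_ident_sets[OF sets_M] by simp
  then show "graph_map f \<in> M \<rightarrow>\<^sub>M borel"
    unfolding graph_map_def[abs_def] using fM by (rule borel_measurable_Pair)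
  show "Dmax x r \<in> sets M" using sets_M closed_Dmax borel_closed by blast
qed

lemma integrable_indicator_Dmax_prod_kernel:
  assumes r: "0 < r"
  shows "integrable M (\<lambda>y. indicator (Dmax x r) y * prod_kernel r (f y - f x))"
proof -
  have "(\<lambda>y. prod_kernel r (f y - f x)) \<in> borel_measurable M"
    using measurable_compose[OF measurable_f borel_measurable_prod_kernel_shift[OF r]] .
  then show ?thesis
    by (intro integrable_const_bound[where B=1] borel_measurable_times)
       (auto simp: indicator_def prod_kernel_le_1 prod_kernel_nonneg r abs_mult)
qed

lemma measure_cball_graph_le_set_integral:
  assumes r: "0 < r"
  shows "measure (distr M borel (graph_map f)) (cball (graph_map f x) r) \<le> (LINT y:Dmax x r|M. I_d_f f x y r)"
proof -
  have "measure (distr M borel (graph_map f)) (cball (graph_map f x) r)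
      = (LINT z|distr M borel (graph_map f). indicator (cball (graph_map f x) r) z)"
    by simp
  also have "\<dots> = (LINT y|M. indicator (cball (graph_map f x) r) (graph_map f y))"
    by (rule integral_distr) measurable
  also have "\<dots> \<le> (LINT y|M. indicator (Dmax x r) y * prod_kernel r (f y - f x))"
  proof (rule integral_mono[OF _ integrable_indicator_Dmax_prod_kernel[OF r]])
    show "integrable M (\<lambda>y. indicator (cball (graph_map f x) r) (graph_map f y) :: real)"
      by (intro integrable_const_bound[where B=1]) (auto simp: indicator_def)
    fix y
    show "indicator (cball (graph_map f x) r) (graph_map f y) \<le> indicator (Dmax x r) y * prod_kernel r (f y - f x)"
    proof (cases "dist (x, f x) (y, f y) \<le> r")
      case True
      then have "norm (y - x) \<le> r" "norm (f y - f x) \<le> r"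
        using dist_fst_le[of "(x, f x)" "(y, f y)"] dist_snd_le[of "(x, f x)" "(y, f y)"]
        by (simp_all add: dist_norm norm_minus_commute)
      then have "y \<in> Dmax x r" "prod_kernel r (f y - f x) = 1"
        using r component_le_norm_cart[of "y - x"] prod_kernel_eq_1_of_norm_le
        by (auto simp: Dmax_def intro: order_trans)
      then show ?thesis by (simp add: indicator_def)
    qed (simp add: graph_map_def indicator_def prod_kernel_nonneg r)
  qed
  also have "\<dots> = (LINT y:Dmax x r|M. I_d_f f x y r)"
    using r by (rule set_integral_I_d_f_eq[symmetric])
  finally show ?thesis .
qed

lemma set_integral_le_kernel_integral_graph:
  assumes r: "0 < r"
  shows "(LINT y:Dmax x r|M. I_d_f f x y r) \<le> kernel_integral (distr M borel (graph_map f)) (graph_map f x) r"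
proof -
  have "(LINT y:Dmax x r|M. I_d_f f x y r) = (LINT y|M. indicator (Dmax x r) y * prod_kernel r (f y - f x))"
    using r by (rule set_integral_I_d_f_eq)
  also have "\<dots> \<le> (LINT y|M. prod_kernel r (y - x) * prod_kernel r (f y - f x))"
  proof (rule integral_mono[OF integrable_indicator_Dmax_prod_kernel[OF r]])
    have "(\<lambda>y. prod_kernel r (graph_map f y - graph_map f x)) \<in> borel_measurable M"
      using measurable_compose[OF measurable_graph_map borel_measurable_prod_kernel_shift[OF r]] .
    then show "integrable M (\<lambda>y. prod_kernel r (y - x) * prod_kernel r (f y - f x))"
      by (intro integrable_const_bound[where B=1])
         (auto simp: graph_map_def prod_kernel_Pair prod_kernel_le_1 prod_kernel_nonneg r abs_mult
           intro!: AE_I2 mult_le_one)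
    fix y
    have "y \<in> Dmax x r \<Longrightarrow> prod_kernel r (y - x) = 1"
      using r by (intro prod_kernel_vec_eq_1) (auto simp: Dmax_def)
    then show "indicator (Dmax x r) y * prod_kernel r (f y - f x) \<le> prod_kernel r (y - x) * prod_kernel r (f y - f x)"
      using r by (cases "y \<in> Dmax x r") (auto simp: prod_kernel_nonneg)
  qed
  also have "\<dots> = kernel_integral (distr M borel (graph_map f)) (graph_map f x) r"
    using r by (simp add: kernel_integral_distr graph_map_def prod_kernel_Pair)
  finally show ?thesis .
qed

end

lemma packing_dim_measure_graph_eq_Sup_I_d_f:
  fixes f :: "real^'n \<Rightarrow> real^'d" and M :: "(real^'n) measure"
  assumes M: "prob_space M" and sets_M: "sets M = sets borel" and f: "f \<in> borel_measurable borel"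
  shows "packing_dim_measure (distr M borel (graph_map f)) =
    Sup {ereal \<gamma> | \<gamma>. AE x in M. Liminf (at_right 0)
      (\<lambda>r. ereal (r powr (-\<gamma>) * (LINT y:Dmax x r|M. I_d_f f x y r))) = 0}"
proof -
  have fin: "finite_measure M" using M by (simp add: prob_space_def)
  show ?thesis
    using measure_cball_graph_le_set_integral[OF fin sets_M f]
      set_integral_le_kernel_integral_graph[OF fin sets_M f]
    by (intro packing_dim_measure_distr_eq_Sup_Liminf[OF M measurable_graph_map[OF fin sets_M f]])
qed

theorem corollary2p9:
  fixes f :: "real^'n \<Rightarrow> real^'d" and M :: "(real^'n) measure"
  assumes "f \<in> borel_measurable borel"
    and "prob_space M" and "sets M = sets borel"
  shows "(packing_dim_measure (distr M borel f) =
           Sup {ereal \<gamma> | \<gamma>. AE x in M.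
              Liminf (at_right 0) (\<lambda>r. ereal (r powr (-\<gamma>) * (LINT y|M. I_d_f f x y r))) = 0}) \<and>
         (packing_dim_measure (distr M borel (graph_map f)) =
           Sup {ereal \<gamma> | \<gamma>. AE x in M.
              Liminf (at_right 0) (\<lambda>r. ereal (r powr (-\<gamma>) * (LINT y:Dmax x r|M. I_d_f f x y r))) = 0})"
  using packing_dim_measure_distr_eq_Sup_I_d_f[OF assms(2,3,1)]
    packing_dim_measure_graph_eq_Sup_I_d_f[OF assms(2,3,1)] by blast

end
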